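(* Let $\Gamma$ be a regular bipartite simple graph. Then $E(\Gamma)=E(\bar\Gamma)$ if and only if $\Gamma\cong C_4$ or $\Gamma\cong Cr(t)$ for some $t\ge 2$. Moreover, in these cases $\Gamma$ and $\bar\Gamma$ are both integral and are not isospectral to each other.
   Context: The energy $E(\Gamma)$ is the sum of the absolute values of the adjacency eigenvalues (with multiplicity); $\bar\Gamma$ is the complement of $\Gamma$. $C_4$ is the 4-cycle. The crown graph $Cr(t)$ is obtained from the complete bipartite graph $K_{t,t}$ by deleting a perfect matching (equivalently $Cr(t)=K_2\otimes K_t$, Kronecker product). A graph is integral if all its adjacency eigenvalues are integers; two graphs are isospectral if their adjacency spectra (with multiplicities) coincide. *)

theory Defs
  imports "Jordan_Normal_Form.Char_Poly" "HOL-Computational_Algebra.Polynomial"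
begin

definition simple_graph :: "nat \<Rightarrow> (nat \<Rightarrow> nat \<Rightarrow> bool) \<Rightarrow> bool" where
  "simple_graph n E \<longleftrightarrow> (\<forall>i<n. \<forall>j<n. E i j \<longrightarrow> E j i) \<and> (\<forall>i<n. \<not> E i i)"

definition regular_graph :: "nat \<Rightarrow> (nat \<Rightarrow> nat \<Rightarrow> bool) \<Rightarrow> bool" where
  "regular_graph n E \<longleftrightarrow> (\<exists>k. \<forall>v<n. card {u. u < n \<and> E v u} = k)"

definition bipartite_graph :: "nat \<Rightarrow> (nat \<Rightarrow> nat \<Rightarrow> bool) \<Rightarrow> bool" where
  "bipartite_graph n E \<longleftrightarrow> (\<exists>S. \<forall>i<n. \<forall>j<n. E i j \<longrightarrow> (i \<in> S \<longleftrightarrow> j \<notin> S))"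

definition complement_graph :: "nat \<Rightarrow> (nat \<Rightarrow> nat \<Rightarrow> bool) \<Rightarrow> nat \<Rightarrow> nat \<Rightarrow> bool" where
  "complement_graph n E i j \<longleftrightarrow> i < n \<and> j < n \<and> i \<noteq> j \<and> \<not> E i j"

definition adj_matrix :: "nat \<Rightarrow> (nat \<Rightarrow> nat \<Rightarrow> bool) \<Rightarrow> complex mat" where
  "adj_matrix n E = mat n n (\<lambda>(i, j). if E i j then 1 else 0)"

definition adj_spectrum :: "nat \<Rightarrow> (nat \<Rightarrow> nat \<Rightarrow> bool) \<Rightarrow> complex multiset" where
  "adj_spectrum n E = proots (char_poly (adj_matrix n E))"

definition graph_energy :: "nat \<Rightarrow> (nat \<Rightarrow> nat \<Rightarrow> bool) \<Rightarrow> real" where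
  "graph_energy n E = (\<Sum>x\<in>#adj_spectrum n E. cmod x)"

definition integral_graph :: "nat \<Rightarrow> (nat \<Rightarrow> nat \<Rightarrow> bool) \<Rightarrow> bool" where
  "integral_graph n E \<longleftrightarrow> (\<forall>x\<in>#adj_spectrum n E. x \<in> \<int>)"

definition isospectral :: "nat \<Rightarrow> (nat \<Rightarrow> nat \<Rightarrow> bool) \<Rightarrow> nat \<Rightarrow> (nat \<Rightarrow> nat \<Rightarrow> bool) \<Rightarrow> bool" where
  "isospectral n E m F \<longleftrightarrow> adj_spectrum n E = adj_spectrum m F"

definition graph_iso :: "nat \<Rightarrow> (nat \<Rightarrow> nat \<Rightarrow> bool) \<Rightarrow> nat \<Rightarrow> (nat \<Rightarrow> nat \<Rightarrow> bool) \<Rightarrow> bool" where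
  "graph_iso n E m F \<longleftrightarrow> (\<exists>f. bij_betw f {0..<n} {0..<m} \<and>
     (\<forall>i<n. \<forall>j<n. E i j \<longleftrightarrow> F (f i) (f j)))"

definition C4 :: "nat \<Rightarrow> nat \<Rightarrow> bool" where
  "C4 i j \<longleftrightarrow> i < 4 \<and> j < 4 \<and> ((i + 1) mod 4 = j \<or> (j + 1) mod 4 = i)"

text \<open>Crown graph Cr(t) on {0..<2t}: parts {0..<t} and {t..<2t}, vertex i adjacent
  to t+j iff i \<noteq> j (K_{t,t} minus the perfect matching i -- t+i).\<close>
definition crown :: "nat \<Rightarrow> nat \<Rightarrow> nat \<Rightarrow> bool" where
  "crown t i j \<longleftrightarrow> (i < t \<and> t \<le> j \<and> j < 2 * t \<and> j \<noteq> i + t) \<or>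
                    (j < t \<and> t \<le> i \<and> i < 2 * t \<and> i \<noteq> j + t)"

end

theory Submission
  imports Defs "Jordan_Normal_Form.Schur_Decomposition"
begin

text \<open>
  Let d_1 = k, d_2, ..., d_n be the adjacency spectrum of a k-regular bipartite graph
  G on n vertices. Every row of A + (x + 1) I sums to k + x + 1, so the determinant lemma for a
  rank-one perturbation by the all-ones matrix J expresses the characteristic polynomial of the
  complement, whose adjacency matrix is J - I - A, through det (A + (x + 1) I): the complement has
  spectrum n - 1 - k, -1 - d_2, ..., -1 - d_n. The spectrum of a bipartite graph is
  symmetric, so summing |1 + d| is the same as summing (|1 + d| + |1 - d|) / 2, and hence
  E(complement) - E(G) = n - 2 - 2k + \<Sum> s(d_i) with s(d) = (|1 + d| + |1 - d|) / 2 - |d|.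
  The slack s is nonnegative, vanishes on real numbers of modulus at least 1 and is 1 at 0.

  If k = 0, then 0 is an eigenvalue and the difference is at least n - 1 > 0. Otherwise both
  parts have m = n / 2 \<ge> k vertices, and the difference is at least n - 2 - 2k > 0 unless
  k = m or k = m - 1. For k = m the graph is K_(m,m) with spectrum \<plusminus>k and
  n - 2 zeros, and the difference is 2k - 4, which vanishes only for K_(2,2) = C_4.
  For k = m - 1 every vertex misses exactly one vertex of the other part, so the graph is the
  crown Cr(k + 1) with spectrum \<plusminus>1, \<plusminus>k, and the difference is 0. In both cases the
  spectra are integral, and n - 1 - k (that is, 1 or k + 1) is an eigenvalue of the complement but
  not of G.
\<close>

section \<open>Spectra of complex matrices\<close>

lemma proots_prod_mset_linear_factors:
  "proots (\<Prod>d\<in>#M. [:- d, 1:]) = (M :: 'a :: idom multiset)"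
proof (induction M)
  case (add d M)
  have "proots ([:- d, 1:] * (\<Prod>d\<in>#M. [:- d, 1:])) = proots [:- d, 1:] + proots (\<Prod>d\<in>#M. [:- d, 1:])"
    by (rule proots_mult) (auto simp: prod_mset_zero_iff)
  then show ?case using add by simp
qed simp

lemma char_poly_nonzero:
  fixes A :: "'a :: field mat"
  assumes "A \<in> carrier_mat n n"
  shows "char_poly A \<noteq> 0"
  using degree_monic_char_poly[OF assms] by auto

lemma in_proots_char_poly_iff_eigenvalue:
  fixes A :: "'a :: field mat"
  assumes A: "A \<in> carrier_mat n n"
  shows "x \<in># proots (char_poly A) \<longleftrightarrow> eigenvalue A x"
  by (simp add: char_poly_nonzero[OF A] eigenvalue_root_char_poly[OF A])

lemma char_poly_eq_prod_proots:
  fixes A :: "complex mat"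
  assumes "A \<in> carrier_mat n n"
  shows "char_poly A = (\<Prod>d\<in>#proots (char_poly A). [:- d, 1:])"
    and "size (proots (char_poly A)) = n"
proof -
  obtain es where es: "char_poly A = (\<Prod>e\<leftarrow>es. [:- e, 1:])" "length es = n"
    using char_poly_factorized[OF assms] by blast
  have "char_poly A = (\<Prod>d\<in>#mset es. [:- d, 1:])"
    unfolding es(1) by (metis mset_map prod_mset_prod_list)
  moreover from this have "proots (char_poly A) = mset es"
    by (simp add: proots_prod_mset_linear_factors)
  ultimately show "char_poly A = (\<Prod>d\<in>#proots (char_poly A). [:- d, 1:])"
    and "size (proots (char_poly A)) = n" using es(2) by simp_all
qed

lemma poly_char_poly_eq_prod_proots:
  fixes A :: "complex mat"
  assumes "A \<in> carrier_mat n n"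
  shows "poly (char_poly A) x = (\<Prod>d\<in>#proots (char_poly A). x - d)"
  by (subst char_poly_eq_prod_proots(1)[OF assms]) (simp add: poly_prod_mset)

lemma det_add_smult_one_mat:
  fixes A :: "complex mat"
  assumes A: "A \<in> carrier_mat n n"
  shows "det (A + c \<cdot>\<^sub>m 1\<^sub>m n) = (\<Prod>d\<in>#proots (char_poly A). d + c)"
proof -
  have "- char_matrix A (- c) = (-1) \<cdot>\<^sub>m (A + c \<cdot>\<^sub>m 1\<^sub>m n)"
    using A by (auto simp: char_matrix_def)
  then have "(-1) ^ n * det (A + c \<cdot>\<^sub>m 1\<^sub>m n) = poly (char_poly A) (- c)"
    using A by (simp add: char_poly_matrix[OF A])
  also have "\<dots> = (\<Prod>d\<in>#proots (char_poly A). (-1) * (d + c))"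
    unfolding poly_char_poly_eq_prod_proots[OF A]
    by (intro arg_cong[where f = prod_mset] image_mset_cong) simp
  also have "\<dots> = (-1) ^ n * (\<Prod>d\<in>#proots (char_poly A). d + c)"
    by (simp only: prod_mset.distrib prod_mset_constant char_poly_eq_prod_proots(2)[OF A])
  finally show ?thesis by simp
qed

lemma proots_char_poly_uminus:
  fixes A :: "complex mat"
  assumes A: "A \<in> carrier_mat n n"
  shows "proots (char_poly ((-1) \<cdot>\<^sub>m A)) = image_mset uminus (proots (char_poly A))"
proof -
  have "poly (char_poly ((-1) \<cdot>\<^sub>m A)) x = poly (\<Prod>d\<in>#proots (char_poly A). [:d, 1:]) x" for x
  proof -
    have "- char_matrix ((-1) \<cdot>\<^sub>m A) x = A + x \<cdot>\<^sub>m 1\<^sub>m n"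
      using A by (auto simp: char_matrix_def)
    then show ?thesis
      using A char_poly_matrix[of "(-1) \<cdot>\<^sub>m A" n]
      by (simp add: det_add_smult_one_mat poly_prod_mset add.commute)
  qed
  then have "char_poly ((-1) \<cdot>\<^sub>m A) = (\<Prod>d\<in>#proots (char_poly A). [:d, 1:])"
    by (intro poly_eq_poly_eq_iff[THEN iffD1] ext)
  also have "\<dots> = (\<Prod>d\<in>#image_mset uminus (proots (char_poly A)). [:- d, 1:])"
    by (simp add: image_mset.compositionality o_def)
  finally show ?thesis by (simp add: proots_prod_mset_linear_factors)
qed

definition mat_trace :: "'a :: comm_ring_1 mat \<Rightarrow> 'a" where
  "mat_trace A = (\<Sum>i<dim_row A. A $$ (i, i))"

lemma mat_trace_mult_comm:
  fixes A B :: "'a :: comm_ring_1 mat"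
  assumes "A \<in> carrier_mat n m" "B \<in> carrier_mat m n"
  shows "mat_trace (A * B) = mat_trace (B * A)"
proof -
  have "mat_trace (A * B) = (\<Sum>i<n. \<Sum>j<m. A $$ (i, j) * B $$ (j, i))"
    using assms by (auto simp: mat_trace_def scalar_prod_def atLeast0LessThan intro!: sum.cong)
  also have "\<dots> = (\<Sum>j<m. \<Sum>i<n. B $$ (j, i) * A $$ (i, j))"
    by (subst sum.swap) (simp add: mult.commute)
  also have "\<dots> = mat_trace (B * A)"
    using assms by (auto simp: mat_trace_def scalar_prod_def atLeast0LessThan intro!: sum.cong)
  finally show ?thesis .
qed

lemma mat_trace_similar:
  fixes A :: "'a :: comm_ring_1 mat"
  assumes A: "A \<in> carrier_mat n n" and sim: "similar_mat_wit A B P Q"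
  shows "mat_trace A = mat_trace B"
proof -
  note wit = similar_mat_witD2[OF A sim]
  have "mat_trace A = mat_trace (P * (B * Q))"
    using wit by (simp add: assoc_mult_mat[of _ n n _ n _ n])
  also have "\<dots> = mat_trace ((B * Q) * P)"
    using wit by (intro mat_trace_mult_comm) auto
  also have "\<dots> = mat_trace B"
    using wit by (simp add: assoc_mult_mat[of _ n n _ n _ n])
  finally show ?thesis .
qed

lemma diag_mult_upper_triangular:
  fixes B :: "'a :: comm_ring_1 mat"
  assumes B: "B \<in> carrier_mat n n" "upper_triangular B" and i: "i < n"
  shows "(B * B) $$ (i, i) = B $$ (i, i) ^ 2"
proof -
  have "(B * B) $$ (i, i) = (\<Sum>j\<in>{0..<n}. B $$ (i, j) * B $$ (j, i))"
    using B i by (simp add: scalar_prod_def)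
  also have "\<dots> = (\<Sum>j\<in>{i}. B $$ (i, j) * B $$ (j, i))"
  proof (rule sum.mono_neutral_right)
    show "\<forall>j\<in>{0..<n} - {i}. B $$ (i, j) * B $$ (j, i) = 0"
    proof
      fix j assume "j \<in> {0..<n} - {i}"
      then show "B $$ (i, j) * B $$ (j, i) = 0"
        using B i by (cases "j < i") (auto simp: upper_triangular_def)
    qed
  qed (use i in auto)
  finally show ?thesis by (simp add: power2_eq_square)
qed

lemma complex_mat_triangularizable:
  fixes A :: "complex mat"
  assumes A: "A \<in> carrier_mat n n"
  obtains B P Q where "similar_mat_wit A B P Q" "upper_triangular B"
    "mset (diag_mat B) = proots (char_poly A)"
proof -
  obtain es where es: "char_poly A = (\<Prod>e\<leftarrow>es. [:- e, 1:])"
    using char_poly_factorized[OF A] by blast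
  obtain B P Q where schur: "schur_decomposition A es = (B, P, Q)"
    by (cases "schur_decomposition A es") auto
  have "char_poly A = (\<Prod>d\<in>#mset es. [:- d, 1:])"
    unfolding es by (metis mset_map prod_mset_prod_list)
  then have "proots (char_poly A) = mset es"
    by (simp add: proots_prod_mset_linear_factors)
  then show thesis
    using that schur_decomposition[OF A es schur] by auto
qed

lemma sum_diag_mat: "sum_list (diag_mat B) = (\<Sum>i<dim_row B. B $$ (i, i))"
  by (simp add: diag_mat_def sum_list_sum_nth atLeast0LessThan)

lemma sum_proots_char_poly:
  fixes A :: "complex mat"
  assumes A: "A \<in> carrier_mat n n"
  shows "sum_mset (proots (char_poly A)) = mat_trace A"
proof -
  obtain B P Q where B: "similar_mat_wit A B P Q" "upper_triangular B"
    "mset (diag_mat B) = proots (char_poly A)"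
    by (rule complex_mat_triangularizable[OF A])
  have "sum_mset (proots (char_poly A)) = sum_list (diag_mat B)"
    unfolding B(3)[symmetric] by (simp add: sum_mset_sum_list)
  also have "\<dots> = mat_trace B" by (simp add: sum_diag_mat mat_trace_def)
  also have "\<dots> = mat_trace A" by (rule mat_trace_similar[OF A B(1), symmetric])
  finally show ?thesis .
qed

lemma sum_sq_proots_char_poly:
  fixes A :: "complex mat"
  assumes A: "A \<in> carrier_mat n n"
  shows "(\<Sum>d\<in>#proots (char_poly A). d ^ 2) = mat_trace (A * A)"
proof -
  obtain B P Q where B: "similar_mat_wit A B P Q" "upper_triangular B"
    "mset (diag_mat B) = proots (char_poly A)"
    by (rule complex_mat_triangularizable[OF A])
  have Bc: "B \<in> carrier_mat n n" using similar_mat_witD2(5)[OF A B(1)] .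
  have "similar_mat_wit (A * A) (B * B) P Q"
    using similar_mat_wit_pow[OF B(1), of 2] A Bc by (simp add: numeral_2_eq_2)
  then have "mat_trace (A * A) = mat_trace (B * B)"
    using A by (intro mat_trace_similar) auto
  also have "\<dots> = (\<Sum>i<n. B $$ (i, i) ^ 2)"
    using Bc by (auto simp: mat_trace_def diag_mult_upper_triangular[OF Bc B(2)]
        simp del: index_mult_mat(1) intro!: sum.cong)
  also have "\<dots> = sum_list (map (\<lambda>d. d ^ 2) (diag_mat B))"
    using Bc by (simp add: diag_mat_def sum_list_sum_nth atLeast0LessThan)
  also have "\<dots> = (\<Sum>d\<in>#proots (char_poly A). d ^ 2)"
    unfolding B(3)[symmetric] by (simp add: sum_mset_sum_list flip: mset_map)
  finally show ?thesis by simp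
qed

lemma eigenvector_nonzero_entry:
  assumes "eigenvector A v e" "A \<in> carrier_mat n n"
  obtains i where "i < n" "v $ i \<noteq> 0"
proof -
  have "v \<in> carrier_vec n" "v \<noteq> 0\<^sub>v n" using assms unfolding eigenvector_def by auto
  then show thesis using that by (metis eq_vecI carrier_vecD index_zero_vec(1,2))
qed

definition all_ones_mat :: "nat \<Rightarrow> 'a :: one mat" where
  "all_ones_mat n = mat n n (\<lambda>_. 1)"

lemma all_ones_mat_carrier [simp]: "all_ones_mat n \<in> carrier_mat n n"
  and dim_all_ones_mat [simp]: "dim_row (all_ones_mat n) = n" "dim_col (all_ones_mat n) = n"
  and index_all_ones_mat [simp]: "i < n \<Longrightarrow> j < n \<Longrightarrow> all_ones_mat n $$ (i, j) = 1"
  by (simp_all add: all_ones_mat_def)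

lemma eigenvalue_all_ones_mat:
  assumes "eigenvalue (all_ones_mat n :: 'a :: field_char_0 mat) e"
  shows "e = 0 \<or> e = of_nat n"
proof -
  obtain v where eigvec: "eigenvector (all_ones_mat n) v e"
    using assms unfolding eigenvalue_def by blast
  then have v: "v \<in> carrier_vec n" "all_ones_mat n *\<^sub>v v = e \<cdot>\<^sub>v v"
    unfolding eigenvector_def by auto
  define s where "s = (\<Sum>j<n. v $ j)"
  have ev: "e * v $ i = s" if "i < n" for i
  proof -
    have "(all_ones_mat n *\<^sub>v v) $ i = e * v $ i"
      using arg_cong[OF v(2), of "\<lambda>w. w $ i"] v(1) that by simp
    moreover have "(all_ones_mat n *\<^sub>v v) $ i = s"
      using v(1) that by (simp add: all_ones_mat_def s_def scalar_prod_def atLeast0LessThan)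
    ultimately show ?thesis by simp
  qed
  obtain i where i: "i < n" "v $ i \<noteq> 0"
    by (rule eigenvector_nonzero_entry[OF eigvec all_ones_mat_carrier])
  show ?thesis
  proof (cases "s = 0")
    case True
    then show ?thesis using ev[OF i(1)] i(2) by simp
  next
    case False
    have "e * s = (\<Sum>j<n. e * v $ j)" by (simp add: s_def sum_distrib_left)
    also have "\<dots> = of_nat n * s" using ev by simp
    finally show ?thesis using False by simp
  qed
qed

lemma multiset_two_values:
  assumes "set_mset M \<subseteq> {a, b}" "a \<noteq> b"
  shows "M = replicate_mset (count M a) a + replicate_mset (count M b) b"
  using assms by (intro multiset_eqI) (auto simp: not_in_iff[symmetric])

lemma proots_char_poly_all_ones_mat:
  assumes "0 < n"
  shows "proots (char_poly (all_ones_mat n :: complex mat))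
    = add_mset (of_nat n) (replicate_mset (n - 1) 0)"
proof -
  define M where "M = proots (char_poly (all_ones_mat n :: complex mat))"
  have "set_mset M \<subseteq> {of_nat n, 0}"
    by (auto simp: M_def in_proots_char_poly_iff_eigenvalue[OF all_ones_mat_carrier]
        dest: eigenvalue_all_ones_mat)
  then have M: "M = replicate_mset (count M (of_nat n)) (of_nat n) + replicate_mset (count M 0) 0"
    using assms by (intro multiset_two_values) auto
  have "of_nat (count M (of_nat n)) * of_nat n = sum_mset M"
    by (subst (2) M) simp
  also have "\<dots> = mat_trace (all_ones_mat n)"
    unfolding M_def by (rule sum_proots_char_poly[OF all_ones_mat_carrier])
  also have "\<dots> = of_nat n"
    by (simp add: mat_trace_def)
  finally have "count M (of_nat n) = 1" using assms by simp
  moreover have "size M = n"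
    unfolding M_def by (rule char_poly_eq_prod_proots(2)[OF all_ones_mat_carrier])
  ultimately have "count M 0 = n - 1" by (subst (asm) M) simp
  with \<open>count M (of_nat n) = 1\<close> show ?thesis by (subst M_def[symmetric], subst M) simp
qed

lemma poly_char_poly_all_ones_mat:
  assumes "0 < n"
  shows "poly (char_poly (all_ones_mat n :: complex mat)) x = (x - of_nat n) * x ^ (n - 1)"
  by (simp add: poly_char_poly_eq_prod_proots[OF all_ones_mat_carrier]
      proots_char_poly_all_ones_mat[OF assms])

lemma det_diff_all_ones_mat:
  fixes M :: "complex mat"
  assumes M: "M \<in> carrier_mat n n" and n: "0 < n"
    and row_sum: "\<And>i. i < n \<Longrightarrow> (\<Sum>j<n. M $$ (i, j)) = c"
  shows "c ^ n * det (M - all_ones_mat n) = c ^ (n - 1) * (c - of_nat n) * det M"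
proof -
  \<comment> \<open>- char_matrix J c = c I - J, and M J = c J because every row of M sums to c\<close>
  have "c \<cdot>\<^sub>m (M - all_ones_mat n) = M * (- char_matrix (all_ones_mat n) c)"
  proof (rule eq_matI)
    fix i j assume "i < dim_row (M * (- char_matrix (all_ones_mat n) c))"
      "j < dim_col (M * (- char_matrix (all_ones_mat n) c))"
    then have ij: "i < n" "j < n" using M by (auto simp: char_matrix_def)
    have "(M * (- char_matrix (all_ones_mat n) c)) $$ (i, j)
        = (\<Sum>l<n. M $$ (i, l) * ((if l = j then c else 0) - 1))"
      using M ij by (simp add: scalar_prod_def char_matrix_def atLeast0LessThan flip: sum_negf)
        (auto simp: algebra_simps intro!: sum.cong)
    also have "\<dots> = (\<Sum>l<n. if l = j then c * M $$ (i, l) else 0) - (\<Sum>l<n. M $$ (i, l))"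
      unfolding sum_subtractf[symmetric] by (intro sum.cong) (auto simp: algebra_simps)
    also have "\<dots> = c * M $$ (i, j) - (\<Sum>l<n. M $$ (i, l))"
      using ij by simp
    also have "\<dots> = c * M $$ (i, j) - c"
      using row_sum[OF ij(1)] by simp
    finally show "(c \<cdot>\<^sub>m (M - all_ones_mat n)) $$ (i, j)
        = (M * (- char_matrix (all_ones_mat n) c)) $$ (i, j)"
      using M ij by (simp add: algebra_simps)
  qed (use M in \<open>auto simp: char_matrix_def\<close>)
  moreover have "det (c \<cdot>\<^sub>m (M - all_ones_mat n)) = c ^ n * det (M - all_ones_mat n)"
    using M by simp
  ultimately have "c ^ n * det (M - all_ones_mat n) = det (M * (- char_matrix (all_ones_mat n) c))"
    by simp
  also have "\<dots> = det M * det (- char_matrix (all_ones_mat n) c)"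
    by (rule det_mult[OF M]) simp
  also have "det (- char_matrix (all_ones_mat n) c) = poly (char_poly (all_ones_mat n)) c"
    by (rule char_poly_matrix[OF all_ones_mat_carrier, symmetric])
  also have "\<dots> = (c - of_nat n) * c ^ (n - 1)"
    by (rule poly_char_poly_all_ones_mat[OF n])
  finally show ?thesis by (simp add: algebra_simps)
qed

section \<open>Adjacency matrices and graph isomorphisms\<close>

definition neighbours :: "nat \<Rightarrow> (nat \<Rightarrow> nat \<Rightarrow> bool) \<Rightarrow> nat \<Rightarrow> nat set" where
  "neighbours n E v = {u. u < n \<and> E v u}"

lemma finite_neighbours [simp]: "finite (neighbours n E v)"
  by (simp add: neighbours_def)

lemma adj_matrix_carrier [simp]: "adj_matrix n E \<in> carrier_mat n n"
  and dim_adj_matrix [simp]: "dim_row (adj_matrix n E) = n" "dim_col (adj_matrix n E) = n"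
  and index_adj_matrix [simp]: "i < n \<Longrightarrow> j < n \<Longrightarrow> adj_matrix n E $$ (i, j) = (if E i j then 1 else 0)"
  by (simp_all add: adj_matrix_def)

lemma adj_matrix_mult_vec:
  assumes "v \<in> carrier_vec n" "i < n"
  shows "(adj_matrix n E *\<^sub>v v) $ i = (\<Sum>j\<in>neighbours n E i. v $ j)"
proof -
  have "(adj_matrix n E *\<^sub>v v) $ i = (\<Sum>j\<in>{0..<n}. if E i j then v $ j else 0)"
    using assms by (auto simp: scalar_prod_def intro!: sum.cong)
  also have "\<dots> = (\<Sum>j\<in>neighbours n E i. v $ j)"
    by (simp add: sum.If_cases neighbours_def Int_def)
  finally show ?thesis .
qed

lemma eigenvector_adj_matrix:
  assumes "eigenvector (adj_matrix n E) v e" "i < n"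
  shows "e * v $ i = (\<Sum>j\<in>neighbours n E i. v $ j)"
proof -
  have v: "v \<in> carrier_vec n" "adj_matrix n E *\<^sub>v v = e \<cdot>\<^sub>v v"
    using assms(1) unfolding eigenvector_def by auto
  then have "e * v $ i = (adj_matrix n E *\<^sub>v v) $ i" using assms(2) by simp
  also have "\<dots> = (\<Sum>j\<in>neighbours n E i. v $ j)" by (rule adj_matrix_mult_vec[OF v(1) assms(2)])
  finally show ?thesis .
qed

lemma in_adj_spectrum_iff_eigenvalue: "x \<in># adj_spectrum n E \<longleftrightarrow> eigenvalue (adj_matrix n E) x"
  unfolding adj_spectrum_def by (rule in_proots_char_poly_iff_eigenvalue[OF adj_matrix_carrier])

lemma size_adj_spectrum: "size (adj_spectrum n E) = n"
  unfolding adj_spectrum_def by (rule char_poly_eq_prod_proots(2)[OF adj_matrix_carrier])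

lemma adj_matrix_complement:
  assumes "\<And>i. i < n \<Longrightarrow> \<not> E i i"
  shows "adj_matrix n (complement_graph n E) = all_ones_mat n - 1\<^sub>m n - adj_matrix n E"
  using assms by (intro eq_matI) (auto simp: adj_matrix_def complement_graph_def)

lemma bipartite_adj_spectrum_symmetric:
  assumes bip: "\<And>i j. i < n \<Longrightarrow> j < n \<Longrightarrow> E i j \<Longrightarrow> (i \<in> S \<longleftrightarrow> j \<notin> S)"
  shows "image_mset uminus (adj_spectrum n E) = adj_spectrum n E"
proof -
  define D where "D = mat_diag n (\<lambda>i. if i \<in> S then 1 else (-1 :: complex))"
  have D: "D \<in> carrier_mat n n" "D * D = 1\<^sub>m n"
    unfolding D_def by (simp, subst mat_diag_mult_left[where n = n and nr = n])
      (auto simp: mat_diag_def intro!: eq_matI)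
  have "D * adj_matrix n E * D = (-1) \<cdot>\<^sub>m adj_matrix n E"
    unfolding D_def mat_diag_mult_left[OF adj_matrix_carrier]
    by (subst mat_diag_mult_right[of _ n]) (auto dest: bip intro!: eq_matI)
  then have "similar_mat_wit ((-1) \<cdot>\<^sub>m adj_matrix n E) (adj_matrix n E) D D"
    using D by (intro similar_mat_witI[where n = n]) auto
  then have "char_poly ((-1) \<cdot>\<^sub>m adj_matrix n E) = char_poly (adj_matrix n E)"
    by (intro char_poly_similar) (auto simp: similar_mat_def)
  then show ?thesis
    using proots_char_poly_uminus[OF adj_matrix_carrier, of n E] unfolding adj_spectrum_def by simp
qed

lemma adj_matrix_row_sum:
  assumes "i < n"
  shows "(\<Sum>j<n. adj_matrix n E $$ (i, j)) = of_nat (card (neighbours n E i))"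
proof -
  have "(\<Sum>j<n. adj_matrix n E $$ (i, j)) = (\<Sum>j<n. if E i j then 1 else 0)"
    using assms by (intro sum.cong) auto
  also have "\<dots> = of_nat (card (neighbours n E i))"
    by (simp add: sum.If_cases neighbours_def Int_def lessThan_def)
  finally show ?thesis .
qed

lemma graph_iso_order: "graph_iso n E m F \<Longrightarrow> n = m"
  unfolding graph_iso_def by (metis bij_betw_same_card card_atLeastLessThan diff_zero)

lemma graph_iso_degree:
  assumes iso: "graph_iso n E m F" and regular: "\<And>w. w < m \<Longrightarrow> card (neighbours m F w) = d"
    and v: "v < n"
  shows "card (neighbours n E v) = d"
proof -
  obtain f where f: "bij_betw f {0..<n} {0..<m}" "\<And>i j. i < n \<Longrightarrow> j < n \<Longrightarrow> E i j \<longleftrightarrow> F (f i) (f j)"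
    using iso unfolding graph_iso_def by blast
  have "f ` neighbours n E v = neighbours m F (f v)"
  proof
    show "f ` neighbours n E v \<subseteq> neighbours m F (f v)"
      using f v by (auto simp: neighbours_def dest: bij_betw_apply)
    show "neighbours m F (f v) \<subseteq> f ` neighbours n E v"
    proof
      fix w assume w: "w \<in> neighbours m F (f v)"
      then obtain u where "u < n" "w = f u"
        using bij_betw_imp_surj_on[OF f(1)] by (force simp: neighbours_def)
      then show "w \<in> f ` neighbours n E v" using w f(2)[OF v] by (auto simp: neighbours_def)
    qed
  qed
  moreover have "inj_on f (neighbours n E v)"
    using bij_betw_imp_inj_on[OF f(1)] by (rule inj_on_subset) (auto simp: neighbours_def)
  ultimately have "card (neighbours n E v) = card (neighbours m F (f v))"
    by (metis card_image)
  then show ?thesis using regular bij_betw_apply[OF f(1)] v by simp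
qed

lemma graph_iso_of_inj_on:
  assumes inj: "inj_on f {0..<n}" and into: "\<And>i. i < n \<Longrightarrow> f i < n"
    and adj: "\<And>i j. i < n \<Longrightarrow> j < n \<Longrightarrow> E i j \<longleftrightarrow> F (f i) (f j)"
  shows "graph_iso n E n F"
proof -
  have "f ` {0..<n} = {0..<n}"
    using inj into by (intro endo_inj_surj) auto
  then show ?thesis unfolding graph_iso_def bij_betw_def using inj adj by blast
qed

lemma less_4_cases: "(w :: nat) < 4 \<longleftrightarrow> w = 0 \<or> w = 1 \<or> w = 2 \<or> w = 3"
  by auto

lemma C4_iff_parity: "i < 4 \<Longrightarrow> j < 4 \<Longrightarrow> C4 i j \<longleftrightarrow> (even i \<longleftrightarrow> odd j)"
  unfolding less_4_cases by (elim disjE) (simp_all add: C4_def)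

lemma card_neighbours_C4:
  assumes "x < 4"
  shows "card (neighbours 4 C4 x) = 2"
proof -
  have "neighbours 4 C4 x = {w. w < 4 \<and> (even x \<longleftrightarrow> odd w)}"
    using C4_iff_parity[OF assms] by (auto simp: neighbours_def)
  moreover have "{w. w < 4 \<and> odd w} = {1, 3 :: nat}" "{w. w < 4 \<and> even w} = {0, 2 :: nat}"
    by (auto simp: less_4_cases)
  ultimately show ?thesis by (cases "even x") auto
qed

lemma card_neighbours_crown: "x < 2 * t \<Longrightarrow> card (neighbours (2 * t) (crown t) x) = t - 1"
proof (cases "x < t")
  case True
  then have "neighbours (2 * t) (crown t) x = {t..<2 * t} - {x + t}"
    by (auto simp: neighbours_def crown_def)
  then show ?thesis using True by simp
next
  case False
  moreover assume "x < 2 * t"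
  ultimately have "neighbours (2 * t) (crown t) x = {0..<t} - {x - t}"
    by (auto simp: neighbours_def crown_def)
  then show ?thesis using False \<open>x < 2 * t\<close> by simp
qed

section \<open>Regular graphs and their complements\<close>

locale regular_simple_graph =
  fixes n :: nat and E :: "nat \<Rightarrow> nat \<Rightarrow> bool" and k :: nat
  assumes order_pos: "0 < n"
    and simple: "simple_graph n E"
    and degree: "\<And>v. v < n \<Longrightarrow> card (neighbours n E v) = k"
begin

lemma adj_sym: "i < n \<Longrightarrow> j < n \<Longrightarrow> E i j \<Longrightarrow> E j i"
  and adj_irrefl: "i < n \<Longrightarrow> \<not> E i i"
  using simple unfolding simple_graph_def by blast+

lemma degree_in_adj_spectrum: "of_nat k \<in># adj_spectrum n E"
proof -
  define one where "one = vec n (\<lambda>_. 1 :: complex)"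
  have "adj_matrix n E *\<^sub>v one = of_nat k \<cdot>\<^sub>v one"
  proof (rule eq_vecI)
    fix i assume "i < dim_vec (of_nat k \<cdot>\<^sub>v one)"
    then have i: "i < n" by (simp add: one_def)
    have "(\<Sum>j\<in>neighbours n E i. one $ j) = of_nat (card (neighbours n E i))"
      by (simp add: one_def neighbours_def)
    then show "(adj_matrix n E *\<^sub>v one) $ i = (of_nat k \<cdot>\<^sub>v one) $ i"
      using adj_matrix_mult_vec[of one n i E] i degree[OF i] by (simp add: one_def)
  qed (simp add: one_def)
  moreover have "one \<noteq> 0\<^sub>v n"
  proof
    assume "one = 0\<^sub>v n"
    then have "one $ 0 = 0" using order_pos by simp
    then show False using order_pos by (simp add: one_def)
  qed
  ultimately have "eigenvector (adj_matrix n E) one (of_nat k)"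
    by (simp add: eigenvector_def one_def)
  then show ?thesis
    unfolding in_adj_spectrum_iff_eigenvalue eigenvalue_def by blast
qed

lemma sum_sq_adj_spectrum: "(\<Sum>d\<in>#adj_spectrum n E. d ^ 2) = of_nat (n * k)"
proof -
  have "mat_trace (adj_matrix n E * adj_matrix n E)
      = (\<Sum>i<n. \<Sum>j<n. adj_matrix n E $$ (i, j) * adj_matrix n E $$ (j, i))"
    by (auto simp: mat_trace_def scalar_prod_def atLeast0LessThan intro!: sum.cong)
  also have "\<dots> = (\<Sum>i<n. \<Sum>j<n. adj_matrix n E $$ (i, j))"
    using adj_sym by (intro sum.cong) auto
  also have "\<dots> = (\<Sum>i<n. of_nat k)"
  proof (rule sum.cong[OF refl])
    fix i assume "i \<in> {..<n}"
    then show "(\<Sum>j<n. adj_matrix n E $$ (i, j)) = of_nat k"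
      using adj_matrix_row_sum[of i n E] degree[of i] by simp
  qed
  finally show ?thesis
    unfolding adj_spectrum_def sum_sq_proots_char_poly[OF adj_matrix_carrier] by simp
qed

lemma row_sum_adj_matrix_add_smult_one:
  assumes "i < n"
  shows "(\<Sum>j<n. (adj_matrix n E + c \<cdot>\<^sub>m 1\<^sub>m n) $$ (i, j)) = of_nat k + c"
proof -
  have "(\<Sum>j<n. (adj_matrix n E + c \<cdot>\<^sub>m 1\<^sub>m n) $$ (i, j))
      = (\<Sum>j<n. adj_matrix n E $$ (i, j) + (if j = i then c else 0))"
    using assms by (intro sum.cong) (auto simp del: index_adj_matrix)
  also have "\<dots> = (\<Sum>j<n. adj_matrix n E $$ (i, j)) + c"
    using assms by (simp add: sum.distrib del: index_adj_matrix)
  also have "\<dots> = of_nat k + c"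
    using assms by (simp add: adj_matrix_row_sum degree del: index_adj_matrix)
  finally show ?thesis .
qed

lemma poly_char_poly_complement:
  fixes x :: complex
  defines "c \<equiv> of_nat k + 1 + x"
  shows "c ^ n * poly (char_poly (adj_matrix n (complement_graph n E))) x
    = c ^ (n - 1) * (c - of_nat n) * (\<Prod>d\<in>#adj_spectrum n E. d + (1 + x))"
proof -
  define M where "M = adj_matrix n E + (1 + x) \<cdot>\<^sub>m 1\<^sub>m n"
  have M: "M \<in> carrier_mat n n" by (simp add: M_def)
  have row_sum: "(\<Sum>j<n. M $$ (i, j)) = c" if "i < n" for i
    using row_sum_adj_matrix_add_smult_one[OF that] by (simp add: M_def c_def add.assoc)
  have "- char_matrix (adj_matrix n (complement_graph n E)) x = M - all_ones_mat n"
    using adj_irrefl by (auto simp: M_def adj_matrix_complement char_matrix_def intro!: eq_matI)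
  then have "poly (char_poly (adj_matrix n (complement_graph n E))) x = det (M - all_ones_mat n)"
    by (simp only: char_poly_matrix[OF adj_matrix_carrier])
  then have "c ^ n * poly (char_poly (adj_matrix n (complement_graph n E))) x
      = c ^ (n - 1) * (c - of_nat n) * det M"
    using det_diff_all_ones_mat[OF M order_pos row_sum] by simp
  also have "det M = (\<Prod>d\<in>#adj_spectrum n E. d + (1 + x))"
    unfolding M_def adj_spectrum_def by (rule det_add_smult_one_mat[OF adj_matrix_carrier])
  finally show ?thesis .
qed

lemma char_poly_complement:
  "[:of_nat k + 1, 1:] * char_poly (adj_matrix n (complement_graph n E))
    = [:of_nat k + 1 - of_nat n, 1:] * (\<Prod>d\<in>#adj_spectrum n E. [:d + 1, 1:])"
proof -
  let ?q = "[:of_nat k + 1, 1:] :: complex poly"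
  have "?q ^ n * char_poly (adj_matrix n (complement_graph n E))
      = ?q ^ (n - 1) * [:of_nat k + 1 - of_nat n, 1:] * (\<Prod>d\<in>#adj_spectrum n E. [:d + 1, 1:])"
  proof (intro poly_eq_poly_eq_iff[THEN iffD1] ext)
    fix x
    show "poly (?q ^ n * char_poly (adj_matrix n (complement_graph n E))) x
      = poly (?q ^ (n - 1) * [:of_nat k + 1 - of_nat n, 1:]
          * (\<Prod>d\<in>#adj_spectrum n E. [:d + 1, 1:])) x"
      using poly_char_poly_complement[of x] by (simp add: poly_prod_mset algebra_simps)
  qed
  moreover have "?q ^ n = ?q ^ (n - 1) * ?q"
    using order_pos by (cases n) auto
  ultimately have "?q ^ (n - 1) * (?q * char_poly (adj_matrix n (complement_graph n E)))
      = ?q ^ (n - 1) * ([:of_nat k + 1 - of_nat n, 1:] * (\<Prod>d\<in>#adj_spectrum n E. [:d + 1, 1:]))"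
    by (simp only: mult.assoc)
  moreover have "?q ^ (n - 1) \<noteq> 0" by simp
  ultimately show ?thesis by simp
qed

lemma adj_spectrum_complement:
  "adj_spectrum n (complement_graph n E)
    = add_mset (of_nat n - 1 - of_nat k)
        (image_mset (\<lambda>d. - 1 - d) (adj_spectrum n E - {#of_nat k#}))"
proof -
  define R where "R = adj_spectrum n E - {#of_nat k#}"
  have spectrum: "adj_spectrum n E = add_mset (of_nat k) R"
    unfolding R_def using degree_in_adj_spectrum by simp
  have "proots ([:of_nat k + 1, 1:] * char_poly (adj_matrix n (complement_graph n E)))
      = add_mset (- 1 - of_nat k) (adj_spectrum n (complement_graph n E))"
    by (subst proots_mult) (simp_all add: char_poly_nonzero[OF adj_matrix_carrier] adj_spectrum_def)
  moreover have "(\<Prod>d\<in>#adj_spectrum n E. [:d + 1, 1:])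
      = (\<Prod>e\<in>#image_mset (\<lambda>d. - 1 - d) (adj_spectrum n E). [:- e, 1:])"
    by (simp add: image_mset.compositionality o_def)
  then have "proots ([:of_nat k + 1 - of_nat n, 1:] * (\<Prod>d\<in>#adj_spectrum n E. [:d + 1, 1:]))
      = add_mset (of_nat n - 1 - of_nat k) (image_mset (\<lambda>d. - 1 - d) (adj_spectrum n E))"
    by (subst proots_mult) (auto simp: proots_prod_mset_linear_factors prod_mset_zero_iff)
  ultimately have "add_mset (- 1 - of_nat k) (adj_spectrum n (complement_graph n E))
      = add_mset (- 1 - of_nat k) (add_mset (of_nat n - 1 - of_nat k) (image_mset (\<lambda>d. - 1 - d) R))"
    by (simp only: char_poly_complement spectrum image_mset_add_mset add_mset_commute)
  then show ?thesis unfolding R_def by simp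
qed

lemma degree_lt_order: "k < n"
proof -
  have "neighbours n E 0 \<subseteq> {..<n} - {0}"
    using adj_irrefl order_pos by (auto simp: neighbours_def)
  then have "card (neighbours n E 0) \<le> card ({..<n} - {0})"
    by (intro card_mono) auto
  then show ?thesis using degree[OF order_pos] order_pos by simp
qed

lemma integral_complement:
  assumes "integral_graph n E"
  shows "integral_graph n (complement_graph n E)"
  using assms unfolding integral_graph_def adj_spectrum_complement
  by (auto dest: in_diffD intro!: Ints_diff)

lemma not_isospectral_complement:
  assumes "of_nat n - 1 - of_nat k \<notin># adj_spectrum n E"
  shows "\<not> isospectral n E n (complement_graph n E)"
proof -
  have "of_nat n - 1 - of_nat k \<in># adj_spectrum n (complement_graph n E)"
    by (simp add: adj_spectrum_complement)
  then show ?thesis using assms unfolding isospectral_def by auto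
qed

end

section \<open>Regular bipartite graphs\<close>

text \<open>For real d, energy_slack d = max 0 (1 - |d|).\<close>

definition energy_slack :: "complex \<Rightarrow> real" where
  "energy_slack d = (cmod (1 + d) + cmod (1 - d)) / 2 - cmod d"

lemma energy_slack_nonneg: "0 \<le> energy_slack d"
proof -
  have "cmod ((1 + d) - (1 - d)) \<le> cmod (1 + d) + cmod (1 - d)"
    by (rule norm_triangle_ineq4)
  then show ?thesis by (simp add: energy_slack_def norm_mult)
qed

lemma sum_mset_energy_slack:
  "(\<Sum>d\<in>#M. energy_slack d)
    = ((\<Sum>d\<in>#M. cmod (1 + d)) + (\<Sum>d\<in>#M. cmod (1 - d))) / 2 - (\<Sum>d\<in>#M. cmod d)"
  unfolding energy_slack_def by (induction M) (auto simp: algebra_simps add_divide_distrib)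

lemma energy_slack_0 [simp]: "energy_slack 0 = 1"
  by (simp add: energy_slack_def)

lemma energy_slack_of_nat:
  assumes "1 \<le> j"
  shows "energy_slack (of_nat j) = 0" "energy_slack (- of_nat j) = 0"
proof -
  have "cmod (1 + of_nat j) = real j + 1"
    using norm_of_nat[of "j + 1"] by (simp add: add.commute)
  moreover have "cmod (1 - of_nat j) = real j - 1"
    using assms norm_of_real[of "1 - real j"] by simp
  ultimately show "energy_slack (of_nat j) = 0" "energy_slack (- of_nat j) = 0"
    by (simp_all add: energy_slack_def)
qed

lemma zero_of_swapped_eigen_equations:
  fixes x c a b :: "'a :: idom"
  assumes "x * a = c * b" "x * b = c * a" "x ^ 2 \<noteq> c ^ 2"
  shows "a = 0"
proof -
  have "x ^ 2 * a = x * (c * b)"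
    using assms(1) by (simp add: power2_eq_square mult.assoc)
  also have "\<dots> = c * (x * b)"
    by (simp add: mult.left_commute)
  also have "\<dots> = c ^ 2 * a"
    using assms(2) by (simp add: power2_eq_square mult.assoc)
  finally show "a = 0" using assms(3) by simp
qed

locale regular_bipartite_graph = regular_simple_graph +
  fixes S :: "nat set"
  assumes bipartition: "\<And>i j. i < n \<Longrightarrow> j < n \<Longrightarrow> E i j \<Longrightarrow> (i \<in> S \<longleftrightarrow> j \<notin> S)"
begin

definition left_part :: "nat set" where
  "left_part = {i. i < n \<and> i \<in> S}"

definition right_part :: "nat set" where
  "right_part = {i. i < n \<and> i \<notin> S}"

definition other_part :: "nat \<Rightarrow> nat set" where
  "other_part i = (if i \<in> S then right_part else left_part)"

lemma finite_parts [simp]: "finite left_part" "finite right_part" "finite (other_part i)"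
  by (simp_all add: left_part_def right_part_def other_part_def)

lemma other_part_less: "j \<in> other_part i \<Longrightarrow> j < n"
  by (auto simp: other_part_def left_part_def right_part_def split: if_splits)

lemma neighbours_subset_other_part: "i < n \<Longrightarrow> neighbours n E i \<subseteq> other_part i"
  using bipartition by (auto simp: neighbours_def other_part_def left_part_def right_part_def)

lemma card_neighbours_eq_sum:
  assumes "i < n"
  shows "card (neighbours n E i) = (\<Sum>j\<in>other_part i. if E i j then 1 else 0)"
proof -
  have "neighbours n E i = {j \<in> other_part i. E i j}"
    using neighbours_subset_other_part[OF assms] other_part_less by (auto simp: neighbours_def)
  then show ?thesis by (simp add: sum.If_cases Int_def)
qed

lemma card_parts_eq:
  assumes "0 < k"
  shows "card right_part = card left_part"
proof -
  have "k * card left_part = (\<Sum>i\<in>left_part. card (neighbours n E i))"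
    by (simp add: degree left_part_def)
  also have "\<dots> = (\<Sum>i\<in>left_part. \<Sum>j\<in>right_part. if E i j then 1 else 0)"
    by (intro sum.cong) (auto simp: card_neighbours_eq_sum left_part_def other_part_def)
  also have "\<dots> = (\<Sum>j\<in>right_part. \<Sum>i\<in>left_part. if E j i then 1 else 0)"
  proof -
    have "E i j = E j i" if "i \<in> left_part" "j \<in> right_part" for i j
      using that adj_sym by (auto simp: left_part_def right_part_def)
    then show ?thesis by (subst sum.swap) (intro sum.cong refl, simp)
  qed
  also have "\<dots> = (\<Sum>j\<in>right_part. card (neighbours n E j))"
    by (intro sum.cong) (auto simp: card_neighbours_eq_sum right_part_def other_part_def)
  also have "\<dots> = k * card right_part"
    by (simp add: degree right_part_def)
  finally show ?thesis using assms by simp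
qed

lemma order_eq_twice_card_part:
  assumes "0 < k"
  shows "n = 2 * card left_part"
proof -
  have "left_part \<union> right_part = {..<n}" "left_part \<inter> right_part = {}"
    by (auto simp: left_part_def right_part_def)
  then have "card left_part + card right_part = n"
    using card_Un_disjoint[of left_part right_part] by simp
  then show ?thesis using card_parts_eq[OF assms] by simp
qed

lemma degree_le_card_part: "k \<le> card left_part"
proof (cases "k = 0")
  case False
  then have "n = 2 * card left_part" by (intro order_eq_twice_card_part) simp
  then obtain i where i: "i \<in> left_part"
    using order_pos by (metis all_not_in_conv card.empty mult_0_right less_irrefl)
  then have "neighbours n E i \<subseteq> right_part"
    using neighbours_subset_other_part[of i] by (simp add: left_part_def other_part_def)
  then have "k \<le> card right_part"
    using i degree by (metis card_mono finite_parts(2) left_part_def mem_Collect_eq)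
  then show ?thesis using card_parts_eq False by simp
qed simp

lemma degree_cases: "k = 0 \<or> 2 * k + 4 \<le> n \<or> n = 2 * k \<or> n = 2 * k + 2"
proof (cases "k = 0")
  case False
  then have "n = 2 * card left_part" by (intro order_eq_twice_card_part) simp
  with degree_le_card_part show ?thesis by arith
qed simp

lemma neighbours_eq_other_part:
  assumes "0 < k" "n = 2 * k" "i < n"
  shows "neighbours n E i = other_part i"
proof (rule card_subset_eq)
  have "card left_part = k"
    using order_eq_twice_card_part[OF assms(1)] assms(2) by simp
  then have "card (other_part i) = k"
    using card_parts_eq[OF assms(1)] by (simp add: other_part_def)
  then show "card (neighbours n E i) = card (other_part i)"
    using degree[OF assms(3)] by simp
qed (use neighbours_subset_other_part assms(3) in auto)

lemma energy_complement_diff: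
  "graph_energy n (complement_graph n E) - graph_energy n E
    = real n - 2 - 2 * real k + (\<Sum>d\<in>#adj_spectrum n E. energy_slack d)"
proof -
  define R where "R = adj_spectrum n E - {#of_nat k#}"
  have spectrum: "adj_spectrum n E = add_mset (of_nat k) R"
    unfolding R_def using degree_in_adj_spectrum by simp
  have top: "(of_nat n - 1 - of_nat k :: complex) = of_nat (n - 1 - k)"
    using degree_lt_order by (simp add: of_nat_diff)
  have "cmod (of_nat n - 1 - of_nat k :: complex) = real n - 1 - real k"
    unfolding top norm_of_nat using degree_lt_order by (simp add: of_nat_diff)
  moreover have "cmod (- 1 - d) = cmod (1 + d)" for d :: complex
    using norm_minus_cancel[of "1 + d"] by (simp add: algebra_simps)
  ultimately have complement: "graph_energy n (complement_graph n E)
      = real n - 1 - real k + (\<Sum>d\<in>#R. cmod (1 + d))"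
    unfolding graph_energy_def adj_spectrum_complement R_def[symmetric]
    by (simp add: image_mset.compositionality o_def)
  have plus: "(\<Sum>d\<in>#adj_spectrum n E. cmod (1 + d)) = 1 + real k + (\<Sum>d\<in>#R. cmod (1 + d))"
    using norm_of_nat[of "1 + k"] by (simp add: spectrum)
  have "(\<Sum>d\<in>#adj_spectrum n E. cmod (1 - d))
      = (\<Sum>d\<in>#image_mset uminus (adj_spectrum n E). cmod (1 + d))"
    by (simp add: image_mset.compositionality o_def)
  then have minus: "(\<Sum>d\<in>#adj_spectrum n E. cmod (1 - d)) = (\<Sum>d\<in>#adj_spectrum n E. cmod (1 + d))"
    by (simp add: bipartite_adj_spectrum_symmetric[OF bipartition])
  have "(\<Sum>d\<in>#adj_spectrum n E. energy_slack d)
      = (\<Sum>d\<in>#adj_spectrum n E. cmod (1 + d)) - graph_energy n E"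
    by (simp only: sum_mset_energy_slack minus graph_energy_def add_divide_distrib
        field_sum_of_halves)
  then show ?thesis
    using complement plus by simp
qed

lemma adj_spectrum_complete_bipartite:
  assumes k: "0 < k" "n = 2 * k" and x: "x \<in># adj_spectrum n E"
  shows "x = 0 \<or> x = of_nat k \<or> x = - of_nat k"
proof -
  obtain v where v: "eigenvector (adj_matrix n E) v x"
    using x unfolding in_adj_spectrum_iff_eigenvalue eigenvalue_def by blast
  define sL where "sL = (\<Sum>j\<in>left_part. v $ j)"
  define sR where "sR = (\<Sum>j\<in>right_part. v $ j)"
  have card_L: "card left_part = k" and card_R: "card right_part = k"
    using order_eq_twice_card_part[OF k(1)] card_parts_eq[OF k(1)] k(2) by simp_all
  have ev: "x * v $ i = (if i \<in> S then sR else sL)" if "i < n" for i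
    using eigenvector_adj_matrix[OF v that] neighbours_eq_other_part[OF k that]
    by (simp add: other_part_def sL_def sR_def)
  have "x * sL = (\<Sum>i\<in>left_part. sR)"
    unfolding sL_def sum_distrib_left by (intro sum.cong) (auto simp: ev left_part_def)
  then have L: "x * sL = of_nat k * sR" using card_L by simp
  have "x * sR = (\<Sum>i\<in>right_part. sL)"
    unfolding sR_def sum_distrib_left by (intro sum.cong) (auto simp: ev right_part_def)
  then have R: "x * sR = of_nat k * sL" using card_R by simp
  show ?thesis
  proof (cases "x ^ 2 = (of_nat k) ^ 2")
    case True
    then show ?thesis by (simp add: power2_eq_iff)
  next
    case False
    then have "sL = 0" "sR = 0"
      using zero_of_swapped_eigen_equations[OF L R] zero_of_swapped_eigen_equations[OF R L] by auto
    obtain i where "i < n" "v $ i \<noteq> 0"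
      by (rule eigenvector_nonzero_entry[OF v adj_matrix_carrier])
    then show ?thesis using ev[of i] \<open>sL = 0\<close> \<open>sR = 0\<close> by (simp split: if_splits)
  qed
qed

lemma energy_complement_diff_complete_bipartite:
  assumes k: "0 < k" "n = 2 * k"
  shows "graph_energy n (complement_graph n E) - graph_energy n E = 2 * real k - 4"
proof -
  have slack: "complex_of_real (energy_slack d) = 1 - d ^ 2 / (of_nat k) ^ 2"
    if "d \<in># adj_spectrum n E" for d
    using adj_spectrum_complete_bipartite[OF k that] energy_slack_of_nat[of k] k(1) by auto
  have sum_shape: "(\<Sum>d\<in>#M. 1 - d ^ 2 / c) = of_nat (size M) - (\<Sum>d\<in>#M. d ^ 2) / c"
    for M :: "complex multiset" and c
    by (induction M) (simp_all add: diff_divide_distrib add_divide_distrib algebra_simps)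
  have "complex_of_real (\<Sum>d\<in>#adj_spectrum n E. energy_slack d)
      = (\<Sum>d\<in>#adj_spectrum n E. 1 - d ^ 2 / (of_nat k) ^ 2)"
    by (simp add: of_real_hom.hom_sum_mset image_mset.compositionality o_def slack
        cong: image_mset_cong)
  also have "\<dots> = of_nat n - of_nat (n * k) / (of_nat k) ^ 2"
    by (simp add: sum_shape size_adj_spectrum sum_sq_adj_spectrum)
  also have "\<dots> = complex_of_real (real n - 2)"
    using k by (simp add: power2_eq_square)
  finally have "(\<Sum>d\<in>#adj_spectrum n E. energy_slack d) = real n - 2"
    by (simp only: of_real_eq_iff)
  then show ?thesis
    using energy_complement_diff k(2) by simp
qed

lemma energy_lt_complement:
  assumes "2 \<le> n" "k = 0 \<or> 2 * k + 4 \<le> n"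
  shows "graph_energy n E < graph_energy n (complement_graph n E)"
proof -
  have nonneg: "0 \<le> (\<Sum>d\<in>#M. energy_slack d)" for M
    using sum_mset_mono[of M "\<lambda>_. 0" energy_slack] energy_slack_nonneg by simp
  from assms(2) show ?thesis
  proof
    assume "k = 0"
    then have "adj_spectrum n E = add_mset 0 (adj_spectrum n E - {#0#})"
      using degree_in_adj_spectrum by simp
    then have "(\<Sum>d\<in>#adj_spectrum n E. energy_slack d)
        = 1 + (\<Sum>d\<in>#adj_spectrum n E - {#0#}. energy_slack d)"
      by (metis energy_slack_0 image_mset_add_mset sum_mset.add_mset)
    then show ?thesis
      using energy_complement_diff nonneg[of "adj_spectrum n E - {#0#}"] assms(1) \<open>k = 0\<close> by simp
  next
    assume "2 * k + 4 \<le> n"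
    then show ?thesis
      using energy_complement_diff nonneg[of "adj_spectrum n E"] by simp
  qed
qed

lemma other_part_sym: "i < n \<Longrightarrow> j \<in> other_part i \<Longrightarrow> i \<in> other_part j"
  by (auto simp: other_part_def left_part_def right_part_def split: if_splits)

lemma inj_on_by_parts:
  assumes "inj_on f left_part" "inj_on f right_part"
    and "\<And>i j. i \<in> left_part \<Longrightarrow> j \<in> right_part \<Longrightarrow> f i \<noteq> f j"
  shows "inj_on f {0..<n}"
proof -
  have "{0..<n} = left_part \<union> right_part"
    by (auto simp: left_part_def right_part_def)
  with assms show ?thesis by (auto simp: inj_on_Un)
qed

lemma graph_iso_C4:
  assumes nk: "n = 4" "k = 2"
  shows "graph_iso n E 4 C4"
proof -
  have k: "0 < k" "n = 2 * k" using nk by simp_all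
  have "card left_part = 2" "card right_part = 2"
    using order_eq_twice_card_part[OF k(1)] card_parts_eq[OF k(1)] nk by simp_all
  then obtain g h where g: "bij_betw g left_part {0..<2 :: nat}"
    and h: "bij_betw h right_part {0..<2 :: nat}"
    by (metis ex_bij_betw_finite_nat finite_parts(1,2))
  define f where "f i = (if i \<in> S then 2 * g i else 2 * h i + 1)" for i
  have parity: "even (f i) \<longleftrightarrow> i \<in> S" for i
    by (simp add: f_def)
  have less: "f i < 4" if "i < n" for i
    using that bij_betw_apply[OF g, of i] bij_betw_apply[OF h, of i]
    by (auto simp: f_def left_part_def right_part_def)
  have "inj_on f {0..<n}"
  proof (rule inj_on_by_parts)
    show "inj_on f left_part" "inj_on f right_part"
      using bij_betw_imp_inj_on[OF g] bij_betw_imp_inj_on[OF h]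
      by (auto simp: inj_on_def f_def left_part_def right_part_def)
    show "f i \<noteq> f j" if "i \<in> left_part" "j \<in> right_part" for i j
      using parity[of i] parity[of j] that by (auto simp: left_part_def right_part_def)
  qed
  moreover have "E i j \<longleftrightarrow> C4 (f i) (f j)" if "i < n" "j < n" for i j
  proof -
    have "E i j \<longleftrightarrow> j \<in> other_part i"
      using neighbours_eq_other_part[OF k that(1)] that(2) by (auto simp: neighbours_def)
    also have "\<dots> \<longleftrightarrow> (i \<in> S \<longleftrightarrow> j \<notin> S)"
      using that(2) by (auto simp: other_part_def left_part_def right_part_def)
    also have "\<dots> \<longleftrightarrow> C4 (f i) (f j)"
      using C4_iff_parity[OF less[OF that(1)] less[OF that(2)]] parity by auto
    finally show ?thesis .
  qed
  ultimately show ?thesis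
    using graph_iso_of_inj_on[OF _ less] nk by auto
qed

lemma graph_iso_C4_iff: "graph_iso n E 4 C4 \<longleftrightarrow> n = 4 \<and> k = 2"
proof
  assume iso: "graph_iso n E 4 C4"
  then have "n = 4" by (rule graph_iso_order)
  moreover have "k = 2"
    using graph_iso_degree[OF iso card_neighbours_C4, of 0] degree[of 0] \<open>n = 4\<close> by simp
  ultimately show "n = 4 \<and> k = 2" ..
qed (use graph_iso_C4 in blast)

end

section \<open>Crown graphs\<close>

text \<open>
  Here every vertex is adjacent to all but one vertex of the other part, its partner; the graph is
  the crown graph Cr(k + 1).
\<close>

locale crown_like_graph = regular_bipartite_graph +
  assumes degree_pos: "0 < k" and order_eq: "n = 2 * k + 2"
begin

lemma card_left_part: "card left_part = k + 1"
  using order_eq_twice_card_part[OF degree_pos] order_eq by linarith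

lemma card_other_part: "card (other_part i) = k + 1"
  using card_left_part card_parts_eq[OF degree_pos] by (simp add: other_part_def)

definition partner :: "nat \<Rightarrow> nat" where
  "partner i = (THE j. other_part i - neighbours n E i = {j})"

lemma non_neighbours_eq_partner:
  assumes "i < n"
  shows "other_part i - neighbours n E i = {partner i}"
proof -
  have "card (other_part i - neighbours n E i) = 1"
    using card_Diff_subset[OF finite_neighbours neighbours_subset_other_part[OF assms]]
      degree[OF assms] card_other_part by simp
  then obtain j where j: "other_part i - neighbours n E i = {j}"
    by (rule card_1_singletonE)
  then show ?thesis unfolding partner_def j by simp
qed

lemma partner_in_other_part: "i < n \<Longrightarrow> partner i \<in> other_part i"
  using non_neighbours_eq_partner by blast

lemma partner_less: "i < n \<Longrightarrow> partner i < n"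
  using partner_in_other_part other_part_less by blast

lemma adj_iff_not_partner:
  assumes "i < n" "j < n"
  shows "E i j \<longleftrightarrow> j \<in> other_part i \<and> j \<noteq> partner i"
  using non_neighbours_eq_partner[OF assms(1)] neighbours_subset_other_part[OF assms(1)] assms(2)
  by (auto simp: neighbours_def)

lemma partner_partner:
  assumes "i < n"
  shows "partner (partner i) = i"
proof -
  have p: "partner i < n" "partner i \<in> other_part i"
    using partner_less partner_in_other_part assms by auto
  have "\<not> E (partner i) i"
    using adj_iff_not_partner[OF assms p(1)] adj_sym[OF p(1) assms] by blast
  then have "i \<in> other_part (partner i) - neighbours n E (partner i)"
    using other_part_sym[OF assms p(2)] assms by (simp add: neighbours_def)
  then show ?thesis using non_neighbours_eq_partner[OF p(1)] by simp
qed

lemma bij_betw_partner: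
  "bij_betw partner left_part right_part" "bij_betw partner right_part left_part"
proof -
  have L: "partner i \<in> right_part" if "i \<in> left_part" for i
    using partner_in_other_part[of i] that by (auto simp: left_part_def other_part_def)
  have R: "partner i \<in> left_part" if "i \<in> right_part" for i
    using partner_in_other_part[of i] that by (auto simp: right_part_def other_part_def)
  have "\<And>i. i \<in> left_part \<Longrightarrow> partner (partner i) = i" "\<And>i. i \<in> right_part \<Longrightarrow> partner (partner i) = i"
    by (auto simp: left_part_def right_part_def partner_partner)
  with L R show "bij_betw partner left_part right_part" "bij_betw partner right_part left_part"
    by (auto intro!: bij_betw_byWitness[where f' = partner])
qed

lemma card_right_part: "card right_part = k + 1"
  using card_left_part card_parts_eq[OF degree_pos] by simp

lemma eigenvector_crown:
  assumes v: "eigenvector (adj_matrix n E) v x" and i: "i < n"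
  shows "x * v $ i = (\<Sum>j\<in>other_part i. v $ j) - v $ partner i"
proof -
  have "neighbours n E i = other_part i - {partner i}"
    using non_neighbours_eq_partner[OF i] neighbours_subset_other_part[OF i] by blast
  then show ?thesis
    using eigenvector_adj_matrix[OF v i] partner_in_other_part[OF i] by (simp add: sum_diff1)
qed

lemma eigenvector_crown_part_sums:
  assumes v: "eigenvector (adj_matrix n E) v x"
  shows "x * (\<Sum>j\<in>left_part. v $ j) = of_nat k * (\<Sum>j\<in>right_part. v $ j)"
    and "x * (\<Sum>j\<in>right_part. v $ j) = of_nat k * (\<Sum>j\<in>left_part. v $ j)"
proof -
  have "x * (\<Sum>j\<in>left_part. v $ j) = (\<Sum>i\<in>left_part. (\<Sum>j\<in>right_part. v $ j) - v $ partner i)"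
    unfolding sum_distrib_left
    by (intro sum.cong) (auto simp: eigenvector_crown[OF v] left_part_def other_part_def)
  also have "\<dots> = of_nat (k + 1) * (\<Sum>j\<in>right_part. v $ j) - (\<Sum>j\<in>right_part. v $ j)"
    using card_left_part sum.reindex_bij_betw[OF bij_betw_partner(1), of "\<lambda>j. v $ j"]
    by (simp add: sum_subtractf)
  finally show "x * (\<Sum>j\<in>left_part. v $ j) = of_nat k * (\<Sum>j\<in>right_part. v $ j)"
    by (simp add: algebra_simps)
  have "x * (\<Sum>j\<in>right_part. v $ j) = (\<Sum>i\<in>right_part. (\<Sum>j\<in>left_part. v $ j) - v $ partner i)"
    unfolding sum_distrib_left
    by (intro sum.cong) (auto simp: eigenvector_crown[OF v] right_part_def other_part_def)
  also have "\<dots> = of_nat (k + 1) * (\<Sum>j\<in>left_part. v $ j) - (\<Sum>j\<in>left_part. v $ j)"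
    using card_right_part sum.reindex_bij_betw[OF bij_betw_partner(2), of "\<lambda>j. v $ j"]
    by (simp add: sum_subtractf)
  finally show "x * (\<Sum>j\<in>right_part. v $ j) = of_nat k * (\<Sum>j\<in>left_part. v $ j)"
    by (simp add: algebra_simps)
qed

lemma adj_spectrum_crown:
  assumes x: "x \<in># adj_spectrum n E"
  shows "x = 1 \<or> x = - 1 \<or> x = of_nat k \<or> x = - of_nat k"
proof (cases "x ^ 2 = (of_nat k) ^ 2")
  case True
  then show ?thesis by (simp add: power2_eq_iff)
next
  case False
  obtain v where v: "eigenvector (adj_matrix n E) v x"
    using x unfolding in_adj_spectrum_iff_eigenvalue eigenvalue_def by blast
  note sums = eigenvector_crown_part_sums[OF v]
  have "(\<Sum>j\<in>left_part. v $ j) = 0" "(\<Sum>j\<in>right_part. v $ j) = 0"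
    using zero_of_swapped_eigen_equations[OF sums False]
      zero_of_swapped_eigen_equations[OF sums(2,1) False] by auto
  then have flip: "x * v $ i = - v $ partner i" if "i < n" for i
    using eigenvector_crown[OF v that] by (simp add: other_part_def)
  obtain i where i: "i < n" "v $ i \<noteq> 0"
    by (rule eigenvector_nonzero_entry[OF v adj_matrix_carrier])
  have "x ^ 2 * v $ i = - (x * v $ partner i)"
    using flip[OF i(1)] by (simp add: power2_eq_square mult.assoc)
  also have "\<dots> = v $ i"
    using flip[OF partner_less[OF i(1)]] partner_partner[OF i(1)] by simp
  finally have "x ^ 2 = 1" using i(2) by simp
  then show ?thesis unfolding power2_eq_1_iff by blast
qed

lemma energy_eq_complement: "graph_energy n (complement_graph n E) = graph_energy n E"
proof -
  have "energy_slack d = 0" if "d \<in># adj_spectrum n E" for d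
    using adj_spectrum_crown[OF that] energy_slack_of_nat[of 1] energy_slack_of_nat[of k] degree_pos
    by auto
  then have "(\<Sum>d\<in>#adj_spectrum n E. energy_slack d) = 0"
    by (simp cong: image_mset_cong)
  then show ?thesis using energy_complement_diff order_eq by simp
qed

lemma integral_crown: "integral_graph n E"
  unfolding integral_graph_def using adj_spectrum_crown by fastforce

lemma complement_top_not_in_adj_spectrum: "of_nat n - 1 - of_nat k \<notin># adj_spectrum n E"
proof
  assume "of_nat n - 1 - of_nat k \<in># adj_spectrum n E"
  moreover have "of_nat n - 1 - of_nat k = (of_nat (k + 1) :: complex)"
    using order_eq by simp
  ultimately have "of_nat (k + 1) = (1 :: complex) \<or> of_nat (k + 1) = (- 1 :: complex)
      \<or> of_nat (k + 1) = (of_nat k :: complex) \<or> of_nat (k + 1) = (- of_nat k :: complex)"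
    using adj_spectrum_crown by metis
  then show False
    using degree_pos by (auto dest: arg_cong[where f = Re])
qed

lemma partner_in_left_part: "i < n \<Longrightarrow> i \<notin> S \<Longrightarrow> partner i \<in> left_part"
  using bij_betw_apply[OF bij_betw_partner(2), of i] by (simp add: right_part_def)

definition crown_label :: "(nat \<Rightarrow> nat) \<Rightarrow> nat \<Rightarrow> nat" where
  "crown_label g i = (if i \<in> S then g i else k + 1 + g (partner i))"

context
  fixes g :: "nat \<Rightarrow> nat"
  assumes g: "bij_betw g left_part {0..<k + 1}"
begin

lemma label_less: "i \<in> left_part \<Longrightarrow> g i < k + 1"
  using bij_betw_apply[OF g] by simp

lemma crown_label_less:
  assumes "i < n"
  shows "crown_label g i < n"
proof -
  have "crown_label g i < 2 * (k + 1)"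
    using assms label_less[of i] label_less[OF partner_in_left_part, of i]
    by (auto simp: crown_label_def left_part_def)
  then show ?thesis by (simp add: order_eq)
qed

lemma inj_on_crown_label: "inj_on (crown_label g) {0..<n}"
proof (rule inj_on_by_parts)
  show "inj_on (crown_label g) left_part"
    using bij_betw_imp_inj_on[OF g] by (auto simp: inj_on_def crown_label_def left_part_def)
  have "inj_on (g \<circ> partner) right_part"
    using bij_betw_imp_inj_on[OF bij_betw_trans[OF bij_betw_partner(2) g]] .
  then show "inj_on (crown_label g) right_part"
    by (auto simp: inj_on_def crown_label_def right_part_def)
  show "crown_label g i \<noteq> crown_label g j" if "i \<in> left_part" "j \<in> right_part" for i j
    using label_less[OF that(1)] that by (auto simp: crown_label_def left_part_def right_part_def)
qed

lemma adj_iff_crown_label_across: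
  assumes "i \<in> left_part" "j \<in> right_part"
  shows "E i j \<longleftrightarrow> crown (k + 1) (crown_label g i) (crown_label g j)"
proof -
  have ij: "i < n" "j < n" "i \<in> S" "j \<notin> S"
    using assms by (auto simp: left_part_def right_part_def)
  have "crown (k + 1) (crown_label g i) (crown_label g j) \<longleftrightarrow> g (partner j) \<noteq> g i"
    using ij label_less[OF assms(1)] label_less[OF partner_in_left_part[OF ij(2,4)]]
    by (auto simp: crown_label_def crown_def)
  also have "\<dots> \<longleftrightarrow> partner j \<noteq> i"
    using bij_betw_imp_inj_on[OF g] partner_in_left_part[OF ij(2,4)] assms(1)
    by (auto dest: inj_onD)
  also have "\<dots> \<longleftrightarrow> j \<noteq> partner i"
    using partner_partner ij by metis
  also have "\<dots> \<longleftrightarrow> E i j"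
    using adj_iff_not_partner[OF ij(1,2)] ij by (auto simp: other_part_def right_part_def)
  finally show ?thesis by simp
qed

lemma adj_iff_crown_label:
  assumes "i < n" "j < n"
  shows "E i j \<longleftrightarrow> crown (k + 1) (crown_label g i) (crown_label g j)"
proof (cases "i \<in> S"; cases "j \<in> S")
  assume "i \<in> S" "j \<in> S"
  then show ?thesis
    using bipartition[OF assms] label_less[of i] label_less[of j] assms
    by (auto simp: crown_label_def crown_def left_part_def)
next
  assume "i \<in> S" "j \<notin> S"
  then show ?thesis
    using adj_iff_crown_label_across assms by (simp add: left_part_def right_part_def)
next
  assume "i \<notin> S" "j \<in> S"
  then have "E j i \<longleftrightarrow> crown (k + 1) (crown_label g j) (crown_label g i)"
    using adj_iff_crown_label_across assms by (simp add: left_part_def right_part_def)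
  then show ?thesis using adj_sym assms by (auto simp: crown_def)
next
  assume "i \<notin> S" "j \<notin> S"
  then show ?thesis
    using bipartition[OF assms] by (auto simp: crown_label_def crown_def)
qed

end

lemma graph_iso_crown: "graph_iso n E n (crown (k + 1))"
proof -
  obtain g where g: "bij_betw g left_part {0..<k + 1}"
    using ex_bij_betw_finite_nat[OF finite_parts(1)] card_left_part by auto
  show ?thesis
    by (rule graph_iso_of_inj_on[where F = "crown (k + 1)", OF inj_on_crown_label[OF g]
          crown_label_less[OF g] adj_iff_crown_label[OF g]])
qed

end

section \<open>Classification\<close>

context regular_bipartite_graph
begin

lemma graph_iso_crown_iff:
  "(\<exists>t\<ge>2. graph_iso n E (2 * t) (crown t)) \<longleftrightarrow> 0 < k \<and> n = 2 * k + 2"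
proof
  assume "\<exists>t\<ge>2. graph_iso n E (2 * t) (crown t)"
  then obtain t where t: "2 \<le> t" "graph_iso n E (2 * t) (crown t)" by blast
  have "n = 2 * t" using graph_iso_order[OF t(2)] .
  moreover have "k = t - 1"
    using graph_iso_degree[OF t(2) card_neighbours_crown, of 0] degree[of 0] \<open>n = 2 * t\<close> t(1)
    by simp
  ultimately show "0 < k \<and> n = 2 * k + 2" using t(1) by simp
next
  assume "0 < k \<and> n = 2 * k + 2"
  then interpret crown_like_graph n E k S by unfold_locales auto
  have "graph_iso n E (2 * (k + 1)) (crown (k + 1))"
    using graph_iso_crown order_eq by simp
  then show "\<exists>t\<ge>2. graph_iso n E (2 * t) (crown t)"
    using degree_pos by (intro exI[of _ "k + 1"]) auto
qed

lemma energy_eq_complement_iff: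
  assumes "2 \<le> n"
  shows "graph_energy n E = graph_energy n (complement_graph n E)
    \<longleftrightarrow> (n = 4 \<and> k = 2) \<or> (0 < k \<and> n = 2 * k + 2)"
proof -
  consider "k = 0 \<or> 2 * k + 4 \<le> n" | "0 < k" "n = 2 * k" | "0 < k" "n = 2 * k + 2"
    using degree_cases by auto
  then show ?thesis
  proof cases
    case 1
    then show ?thesis using energy_lt_complement[OF assms] by auto
  next
    case 2
    then show ?thesis using energy_complement_diff_complete_bipartite by auto
  next
    case 3
    then interpret crown_like_graph n E k S by unfold_locales
    show ?thesis using energy_eq_complement 3 by simp
  qed
qed

lemma integral_not_isospectral:
  assumes "(n = 4 \<and> k = 2) \<or> (0 < k \<and> n = 2 * k + 2)"
  shows "integral_graph n E \<and> integral_graph n (complement_graph n E)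
    \<and> \<not> isospectral n E n (complement_graph n E)"
proof -
  from assms have "integral_graph n E \<and> of_nat n - 1 - of_nat k \<notin># adj_spectrum n E"
  proof
    assume nk: "n = 4 \<and> k = 2"
    then have vals: "x = 0 \<or> x = 2 \<or> x = - 2" if "x \<in># adj_spectrum n E" for x
      using adj_spectrum_complete_bipartite[of x] that by simp
    then have "integral_graph n E"
      unfolding integral_graph_def by fastforce
    moreover have "(1 :: complex) \<notin># adj_spectrum n E"
      using vals by fastforce
    ultimately show ?thesis using nk by simp
  next
    assume "0 < k \<and> n = 2 * k + 2"
    then interpret crown_like_graph n E k S by unfold_locales auto
    show ?thesis using integral_crown complement_top_not_in_adj_spectrum by blast
  qed
  then show ?thesis
    using integral_complement not_isospectral_complement by blast
qed

end

theorem mainTheorem4: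
  fixes n :: nat and E :: "nat \<Rightarrow> nat \<Rightarrow> bool"
  assumes "n \<ge> 2"
    and "simple_graph n E"
    and "regular_graph n E"
    and "bipartite_graph n E"
  shows "(graph_energy n E = graph_energy n (complement_graph n E) \<longleftrightarrow>
            (graph_iso n E 4 C4 \<or> (\<exists>t\<ge>2. graph_iso n E (2 * t) (crown t))))
       \<and> (graph_energy n E = graph_energy n (complement_graph n E) \<longrightarrow>
            integral_graph n E \<and> integral_graph n (complement_graph n E) \<and>
            \<not> isospectral n E n (complement_graph n E))"
proof -
  obtain k where "\<And>v. v < n \<Longrightarrow> card {u. u < n \<and> E v u} = k"
    using assms(3) unfolding regular_graph_def by blast
  moreover obtain S where "\<And>i j. i < n \<Longrightarrow> j < n \<Longrightarrow> E i j \<Longrightarrow> (i \<in> S \<longleftrightarrow> j \<notin> S)"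
    using assms(4) unfolding bipartite_graph_def by blast
  ultimately interpret regular_bipartite_graph n E k S
    using assms(1,2) by unfold_locales (auto simp: neighbours_def)
  show ?thesis
    using energy_eq_complement_iff[OF assms(1)] graph_iso_C4_iff graph_iso_crown_iff
      integral_not_isospectral
    by blast
qed

end
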